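(* Let $\Theta\subseteq\mathbb{R}^p$ be convex, and let $f:\mathbb{R}^p\to\mathbb{R}$ be continuous, convex and bounded below, with a minimizer $\theta^\star$ on $\Theta$; set $f^\star\triangleq f(\theta^\star)$. Let $\theta_0\in\Theta$ and assume there is $R>0$ with $\|\theta-\theta^\star\|_2\le R$ for all $\theta\in\Theta$ such that $f(\theta)\le f(\theta_0)$. Consider the sequence generated by: for $n\ge1$, choose $g_n\in\mathcal{S}_L(f,\theta_{n-1})$ and set $\theta_n\in\operatorname{arg\,min}_{\theta\in\Theta}g_n(\theta)$. Assume in addition that each $h_n\triangleq g_n-f$ is twice differentiable, that $\nabla^2 h_n$ is $M$-Lipschitz continuous, and that $\nabla^2h_n(\theta_{n-1})=0$ for all $n$. Then $$f(\theta_n)-f^\star\le\frac{9MR^3}{2(n+3)^2}\quad\text{for all }n\ge1.$$ If moreover $f$ is $\mu$-strongly convex, then $f(\theta_n)-f^\star$ converges to $0$ superlinearly with order $3/2$, i.e., there exist $C>0$ and $n_1$ such that $f(\theta_n)-f^\star\le C\,(f(\theta_{n-1})-f^\star)^{3/2}$ for all $n\ge n_1$.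
   Context: First-order surrogates: given convex $\Theta\subseteq\mathbb{R}^p$, $g:\mathbb{R}^p\to\mathbb{R}$ belongs to $\mathcal{S}_L(f,\kappa)$ if (a) $g(\theta')\ge f(\theta')$ for all $\theta'\in\operatorname{arg\,min}_{\theta\in\Theta}g(\theta)$, and (b) $h\triangleq g-f$ is differentiable on $\mathbb{R}^p$ with $L$-Lipschitz gradient, $h(\kappa)=0$ and $\nabla h(\kappa)=0$. The minimizers $\theta_n$ are assumed to exist. *)

theory Defs
  imports "HOL-Analysis.Analysis"
begin

definition argmin_on :: "'a set \<Rightarrow> ('a \<Rightarrow> real) \<Rightarrow> 'a set" where
  "argmin_on \<Theta> g = {\<theta> \<in> \<Theta>. \<forall>\<theta>'\<in>\<Theta>. g \<theta> \<le> g \<theta>'}"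

definition has_gradient_everywhere :: "('a::euclidean_space \<Rightarrow> real) \<Rightarrow> ('a \<Rightarrow> 'a) \<Rightarrow> bool" where
  "has_gradient_everywhere h G \<longleftrightarrow> (\<forall>x. (h has_derivative (\<lambda>v. G x \<bullet> v)) (at x))"

definition first_order_surrogates ::
  "'a::euclidean_space set \<Rightarrow> real \<Rightarrow> ('a \<Rightarrow> real) \<Rightarrow> 'a \<Rightarrow> ('a \<Rightarrow> real) set" where
  "first_order_surrogates \<Theta> L f \<kappa> =
     {g. (\<forall>\<theta>'\<in>argmin_on \<Theta> g. f \<theta>' \<le> g \<theta>') \<and>
         (\<exists>G. has_gradient_everywhere (\<lambda>x. g x - f x) G \<and>
              (\<forall>x y. norm (G x - G y) \<le> L * norm (x - y)) \<and>
              g \<kappa> - f \<kappa> = 0 \<and> G \<kappa> = 0)}"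

definition strongly_convex :: "real \<Rightarrow> ('a::euclidean_space \<Rightarrow> real) \<Rightarrow> bool" where
  "strongly_convex \<mu> f \<longleftrightarrow> \<mu> > 0 \<and> convex_on UNIV (\<lambda>x. f x - \<mu> / 2 * (norm x)\<^sup>2)"

end

theory Submission imports Defs begin

text \<open>Minimizing the surrogate over \<open>\<Theta>\<close> gives \<open>f \<theta>\<^sub>n \<le> g\<^sub>n \<theta>\<^sub>n \<le> g\<^sub>n x\<close>, and because
  \<open>h\<^sub>n = g\<^sub>n - f\<close> vanishes to second order at \<open>\<theta>\<^sub>n\<^sub>-\<^sub>1\<close> with \<open>M\<close>-Lipschitz Hessian, a third-order
  Taylor bound yields \<open>f \<theta>\<^sub>n \<le> f x + M/6 \<parallel>x - \<theta>\<^sub>n\<^sub>-\<^sub>1\<parallel>\<^sup>3\<close> for every \<open>x \<in> \<Theta>\<close>. So the method is at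
  least as good as cubic regularization. Taking \<open>x\<close> on the segment from \<open>\<theta>\<^sub>n\<^sub>-\<^sub>1\<close> towards \<open>\<theta>\<^sup>\<star>\<close>
  with step \<open>3/(n+3)\<close> and using convexity gives the \<open>O(1/n\<^sup>2)\<close> rate by induction, while
  \<open>x = \<theta>\<^sup>\<star>\<close> together with the quadratic growth of a strongly convex function gives order \<open>3/2\<close>.\<close>

lemma DERIV_le_power_imp_le:
  fixes F F' :: "real \<Rightarrow> real"
  assumes deriv: "\<And>t. 0 \<le> t \<Longrightarrow> (F has_real_derivative F' t) (at t)"
    and F0: "F 0 = 0"
    and bound: "\<And>t. 0 \<le> t \<Longrightarrow> F' t \<le> c * t ^ k"
    and x: "0 \<le> x"
  shows "F x \<le> c * x ^ Suc k / Suc k"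
proof -
  define P where "P t = c * t ^ Suc k / Suc k - F t" for t
  have "P 0 \<le> P x"
  proof (rule DERIV_nonneg_imp_nondecreasing[OF x])
    fix s :: real assume s: "0 \<le> s" "s \<le> x"
    have "((\<lambda>t. c * t ^ Suc k / Suc k) has_real_derivative c * s ^ k) (at s)"
      using DERIV_cdivide[OF DERIV_cmult[OF DERIV_pow[of "Suc k" s]], of c "Suc k"] by simp
    then have "(P has_real_derivative c * s ^ k - F' s) (at s)"
      unfolding P_def by (intro DERIV_diff deriv s(1))
    then show "\<exists>d. (P has_real_derivative d) (at s) \<and> 0 \<le> d"
      using bound[OF s(1)] by auto
  qed
  then show ?thesis using F0 by (simp add: P_def)
qed

lemma cubic_bound_of_hessian_lipschitz:
  fixes h :: "'a::real_inner \<Rightarrow> real" and G :: "'a \<Rightarrow> 'a" and H :: "'a \<Rightarrow> 'a \<Rightarrow> 'a"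
  assumes h_deriv: "\<And>x. (h has_derivative (\<lambda>v. G x \<bullet> v)) (at x)"
    and G_deriv: "\<And>x. (G has_derivative H x) (at x)"
    and H_lipschitz: "\<And>x y. onorm (\<lambda>v. H x v - H y v) \<le> M * norm (x - y)"
    and h0: "h k = 0" and G0: "G k = 0" and H0: "\<And>v. H k v = 0"
  shows "h x \<le> M / 6 * norm (x - k) ^ 3"
proof -
  define y where "y = x - k"
  define c where "c = M * norm y ^ 3"
  have line: "((\<lambda>t. k + t *\<^sub>R y) has_derivative (\<lambda>s. s *\<^sub>R y)) (at t)" for t
    by (auto intro!: derivative_eq_intros)
  have H_linear: "linear (H z)" for z
    using G_deriv has_derivative_linear by blast
  have h_line: "((\<lambda>t. h (k + t *\<^sub>R y)) has_real_derivative G (k + t *\<^sub>R y) \<bullet> y) (at t)" for t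
    using has_derivative_compose[OF line h_deriv]
    by (simp add: has_field_derivative_def o_def mult_commute_abs)
  have G_line: "((\<lambda>t. G (k + t *\<^sub>R y) \<bullet> y) has_real_derivative H (k + t *\<^sub>R y) y \<bullet> y) (at t)" for t
    using has_derivative_inner_left[OF has_derivative_compose[OF line G_deriv], of y]
    by (simp add: has_field_derivative_def o_def linear_scale[OF H_linear] mult_commute_abs)
  have H_line: "H (k + t *\<^sub>R y) y \<bullet> y \<le> c * t ^ 1" if t: "0 \<le> t" for t
  proof -
    have "bounded_linear (\<lambda>v. H (k + t *\<^sub>R y) v - H k v)"
      using G_deriv has_derivative_bounded_linear bounded_linear_sub by blast
    then have "norm (H (k + t *\<^sub>R y) y) \<le> M * norm (t *\<^sub>R y) * norm y"
      using onorm[of "\<lambda>v. H (k + t *\<^sub>R y) v - H k v" y] H_lipschitz[of "k + t *\<^sub>R y" k] H0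
      by (simp add: order_trans[OF _ mult_right_mono])
    then have "H (k + t *\<^sub>R y) y \<bullet> y \<le> M * norm (t *\<^sub>R y) * norm y * norm y"
      using norm_cauchy_schwarz[of "H (k + t *\<^sub>R y) y" y]
      by (meson mult_right_mono norm_ge_zero order_trans)
    then show ?thesis using t by (simp add: c_def power3_eq_cube ac_simps)
  qed
  have "G (k + t *\<^sub>R y) \<bullet> y \<le> c / 2 * t ^ 2" if "0 \<le> t" for t
    using DERIV_le_power_imp_le[OF G_line _ H_line that] G0 by (simp add: power2_eq_square)
  then have "h (k + 1 *\<^sub>R y) \<le> c / 2 * 1 ^ 3 / 3"
    using DERIV_le_power_imp_le[OF h_line _ _, of "c / 2" 2 1] h0 by simp
  then show ?thesis by (simp add: c_def y_def)
qed

lemma has_gradient_everywhere_unique: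
  assumes "has_gradient_everywhere h G" and "has_gradient_everywhere h G'"
  shows "G = G'"
proof
  fix x
  have "(\<lambda>v. G x \<bullet> v) = (\<lambda>v. G' x \<bullet> v)"
    using assms has_derivative_unique unfolding has_gradient_everywhere_def by blast
  then have "(G x - G' x) \<bullet> (G x - G' x) = 0"
    by (metis inner_diff_left diff_self)
  then show "G x = G' x" by simp
qed

lemma surrogate_minimizer_cubic_bound:
  assumes surrogate: "g \<in> first_order_surrogates \<Theta> L f \<kappa>"
    and minimizer: "\<theta>' \<in> argmin_on \<Theta> g"
    and gradient: "has_gradient_everywhere (\<lambda>x. g x - f x) G"
    and hessian: "\<And>x. (G has_derivative H x) (at x)"
    and H_lipschitz: "\<And>x y. onorm (\<lambda>v. H x v - H y v) \<le> M * norm (x - y)"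
    and H0: "\<And>v. H \<kappa> v = 0"
    and x: "x \<in> \<Theta>"
  shows "f \<theta>' \<le> f x + M / 6 * norm (x - \<kappa>) ^ 3"
proof -
  obtain G' where G': "has_gradient_everywhere (\<lambda>x. g x - f x) G'"
    and h0: "g \<kappa> - f \<kappa> = 0" and G'0: "G' \<kappa> = 0"
    and majorizes: "f \<theta>' \<le> g \<theta>'"
    using surrogate minimizer unfolding first_order_surrogates_def by blast
  have "G \<kappa> = 0"
    using has_gradient_everywhere_unique[OF gradient G'] G'0 by simp
  then have "g x - f x \<le> M / 6 * norm (x - \<kappa>) ^ 3"
    using gradient hessian H_lipschitz h0 H0 unfolding has_gradient_everywhere_def
    by (intro cubic_bound_of_hessian_lipschitz[where G = G and H = H]) auto
  moreover have "g \<theta>' \<le> g x"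
    using minimizer x by (auto simp: argmin_on_def)
  ultimately show ?thesis using majorizes by linarith
qed

lemma onorm_lipschitz_const_nonneg:
  fixes H :: "'a::euclidean_space \<Rightarrow> 'a \<Rightarrow> 'b::real_normed_vector"
  assumes "\<And>x. bounded_linear (H x)"
    and "\<And>x y. onorm (\<lambda>v. H x v - H y v) \<le> M * norm (x - y)"
  shows "0 \<le> M"
proof -
  obtain b :: 'a where b: "b \<in> Basis" using nonempty_Basis by blast
  have "0 \<le> onorm (\<lambda>v. H b v - H 0 v)"
    using assms(1) by (intro onorm_pos_le bounded_linear_sub)
  also have "\<dots> \<le> M" using assms(2)[of b 0] b by simp
  finally show ?thesis .
qed

lemma convex_step_bound:
  fixes f :: "'a::real_normed_vector \<Rightarrow> real"
  assumes "convex \<Theta>" and "convex_on UNIV f"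
    and "\<kappa> \<in> \<Theta>" and "\<theta>star \<in> \<Theta>" and "norm (\<kappa> - \<theta>star) \<le> R" and "0 \<le> M"
    and cubic: "\<forall>x\<in>\<Theta>. f \<theta>' \<le> f x + M / 6 * norm (x - \<kappa>) ^ 3"
    and a: "0 \<le> a" "a \<le> 1"
  shows "f \<theta>' - f \<theta>star \<le> (1 - a) * (f \<kappa> - f \<theta>star) + M * R ^ 3 * a ^ 3 / 6"
proof -
  define x where "x = (1 - a) *\<^sub>R \<kappa> + a *\<^sub>R \<theta>star"
  have "x \<in> \<Theta>"
    unfolding x_def using convexD_alt assms by blast
  moreover have "f x \<le> (1 - a) * f \<kappa> + a * f \<theta>star"
    unfolding x_def using convex_onD[OF assms(2) a] by simp
  moreover have "norm (x - \<kappa>) = a * norm (\<kappa> - \<theta>star)"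
    using a by (simp add: x_def algebra_simps norm_minus_commute flip: scaleR_diff_right)
  then have "norm (x - \<kappa>) ^ 3 \<le> (a * R) ^ 3"
    using assms(5) a by (simp add: power_mono mult_left_mono)
  then have "M / 6 * norm (x - \<kappa>) ^ 3 \<le> M / 6 * (a * R) ^ 3"
    using \<open>0 \<le> M\<close> by (intro mult_left_mono) auto
  ultimately show ?thesis
    using cubic by (fastforce simp: algebra_simps power_mult_distrib)
qed

lemma cubic_rate_step:
  fixes x d D :: real
  assumes x: "1 \<le> x" and D: "0 \<le> D" and d: "d \<le> 9 * D / (2 * (x + 2) ^ 2)"
  shows "(1 - 3 / (x + 3)) * d + D * (3 / (x + 3)) ^ 3 / 6 \<le> 9 * D / (2 * (x + 3) ^ 2)"
proof -
  define p q where "p = x + 2" and "q = x + 3"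
  have p: "0 < p" and q: "0 < q" and "q = p + 1"
    using x by (simp_all add: p_def q_def)
  have "1 - 3 / q = x / q"
    using q by (simp add: q_def field_simps)
  then have "(1 - 3 / q) * d \<le> x / q * (9 * D / (2 * p ^ 2))"
    using mult_left_mono[OF d, of "x / q"] x q by (simp add: p_def)
  also have "\<dots> = 9 * D / (2 * q ^ 3) * (x * q ^ 2 / p ^ 2)"
    using p q by (simp add: field_simps power2_eq_square power3_eq_cube)
  also have "\<dots> \<le> 9 * D / (2 * q ^ 3) * p"
  proof (rule mult_left_mono)
    have "x * q ^ 2 \<le> p ^ 3"
      using x by (simp add: p_def q_def power2_eq_square power3_eq_cube algebra_simps)
    then show "x * q ^ 2 / p ^ 2 \<le> p"
      using p by (simp add: pos_divide_le_eq power2_eq_square power3_eq_cube)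
  qed (use q D in simp)
  also have "\<dots> = 9 * D / (2 * q ^ 3) * (q - 1)"
    using \<open>q = p + 1\<close> by simp
  also have "\<dots> = 9 * D / (2 * q ^ 2) - D * (3 / q) ^ 3 / 6"
    using q by (simp add: field_simps power2_eq_square power3_eq_cube)
  finally show ?thesis by (simp add: q_def)
qed

text \<open>The choice \<open>a = 3/(n+3)\<close> in the \<open>n\<close>-th step makes the bound propagate; for \<open>n = 1\<close> the
  step \<open>a = 1\<close> makes the value of \<open>d 0\<close> irrelevant.\<close>

lemma cubic_recurrence_rate:
  fixes d :: "nat \<Rightarrow> real"
  assumes D: "0 \<le> D"
    and recurrence: "\<And>n a. 1 \<le> n \<Longrightarrow> 0 \<le> a \<Longrightarrow> a \<le> 1 \<Longrightarrow> d n \<le> (1 - a) * d (n - 1) + D * a ^ 3 / 6"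
    and n: "1 \<le> n"
  shows "d n \<le> 9 * D / (2 * (real n + 3) ^ 2)"
  using n
proof (induction n rule: dec_induct)
  case base
  then show ?case using recurrence[of 1 1] D by simp
next
  case (step m)
  have "d (Suc m) \<le> (1 - 3 / (real m + 4)) * d m + D * (3 / (real m + 4)) ^ 3 / 6"
    using recurrence[of "Suc m" "3 / (real m + 4)"] by simp
  also have "\<dots> \<le> 9 * D / (2 * (real m + 4) ^ 2)"
    using cubic_rate_step[of "real m + 1" D "d m"] step D by (simp add: algebra_simps)
  finally show ?case by (simp add: algebra_simps)
qed

lemma strongly_convex_quadratic_growth:
  fixes f :: "'a::euclidean_space \<Rightarrow> real"
  assumes "strongly_convex \<mu> f" and "convex \<Theta>"
    and star_in: "\<theta>star \<in> \<Theta>" and star_min: "\<forall>x\<in>\<Theta>. f \<theta>star \<le> f x"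
    and x: "x \<in> \<Theta>"
  shows "norm (x - \<theta>star) ^ 2 \<le> 4 / \<mu> * (f x - f \<theta>star)"
proof -
  have \<mu>: "0 < \<mu>" and cv: "convex_on UNIV (\<lambda>x. f x - \<mu> / 2 * (norm x)\<^sup>2)"
    using assms(1) unfolding strongly_convex_def by auto
  define m where "m = (1 - 1 / 2) *\<^sub>R \<theta>star + (1 / 2 :: real) *\<^sub>R x"
  have "m \<in> \<Theta>"
    unfolding m_def by (rule convexD_alt[OF assms(2) star_in x]) auto
  then have "f \<theta>star \<le> f m" using star_min by blast
  moreover have "f m - \<mu> / 2 * (norm m)\<^sup>2
      \<le> (1 - 1 / 2) * (f \<theta>star - \<mu> / 2 * (norm \<theta>star)\<^sup>2) + 1 / 2 * (f x - \<mu> / 2 * (norm x)\<^sup>2)"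
    unfolding m_def using convex_onD[OF cv, of "1 / 2" \<theta>star x] by simp
  moreover have "\<mu> * ((norm \<theta>star)\<^sup>2 / 2 + (norm x)\<^sup>2 / 2 - (norm m)\<^sup>2) = \<mu> * ((norm (x - \<theta>star))\<^sup>2 / 4)"
    unfolding m_def
    by (simp add: power2_norm_eq_inner inner_add inner_diff algebra_simps inner_commute)
  ultimately have "\<mu> / 4 * norm (x - \<theta>star) ^ 2 \<le> f x - f \<theta>star"
    by (simp add: algebra_simps)
  then show ?thesis using \<mu> by (simp add: field_simps)
qed

lemma cube_le_powr_of_square_le:
  fixes r b :: real
  assumes "0 \<le> r" and "r ^ 2 \<le> b"
  shows "r ^ 3 \<le> b powr (3 / 2)"
proof -
  have "r ^ 3 = (r ^ 2) powr (3 / 2)"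
  proof (cases "r = 0")
    case False
    with assms(1) have "0 < r" by simp
    then have "(r ^ 2) powr (3 / 2) = (r powr 2) powr (3 / 2)" by simp
    also have "\<dots> = r powr 3" by (simp add: powr_powr)
    also have "\<dots> = r ^ 3" using \<open>0 < r\<close> by simp
    finally show ?thesis by simp
  qed simp
  also have "\<dots> \<le> b powr (3 / 2)"
    using assms by (intro powr_mono2) auto
  finally show ?thesis .
qed

text \<open>The constant uses \<open>M + 1\<close> so that it stays positive when \<open>M = 0\<close>.\<close>

lemma cubic_step_superlinear:
  fixes f :: "'a::euclidean_space \<Rightarrow> real"
  assumes strongly_convex: "strongly_convex \<mu> f" and "convex \<Theta>"
    and "\<theta>star \<in> \<Theta>" and star_min: "\<forall>x\<in>\<Theta>. f \<theta>star \<le> f x"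
    and "0 \<le> M" and "\<kappa> \<in> \<Theta>"
    and cubic: "f \<theta>' \<le> f \<theta>star + M / 6 * norm (\<theta>star - \<kappa>) ^ 3"
  shows "f \<theta>' - f \<theta>star \<le> (M + 1) / 6 * (4 / \<mu>) powr (3/2) * (f \<kappa> - f \<theta>star) powr (3/2)"
proof -
  define e where "e = f \<kappa> - f \<theta>star"
  have \<mu>: "0 < \<mu>" using strongly_convex unfolding strongly_convex_def by simp
  have "0 \<le> e" unfolding e_def using star_min \<open>\<kappa> \<in> \<Theta>\<close> by simp
  have growth: "norm (\<kappa> - \<theta>star) ^ 3 \<le> (4 / \<mu> * e) powr (3/2)"
    unfolding e_def
    by (intro cube_le_powr_of_square_le strongly_convex_quadratic_growth) (use assms in simp_all)
  have "f \<theta>' - f \<theta>star \<le> M / 6 * norm (\<kappa> - \<theta>star) ^ 3"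
    using cubic by (simp add: norm_minus_commute)
  also have "\<dots> \<le> M / 6 * (4 / \<mu> * e) powr (3/2)"
    using \<open>0 \<le> M\<close> by (intro mult_left_mono growth) simp
  also have "\<dots> = M / 6 * ((4 / \<mu>) powr (3/2) * e powr (3/2))"
    using \<mu> \<open>0 \<le> e\<close> powr_mult[of "4 / \<mu>" e "3/2"] by simp
  also have "\<dots> \<le> (M + 1) / 6 * ((4 / \<mu>) powr (3/2) * e powr (3/2))"
    by (intro mult_right_mono) simp_all
  finally show ?thesis unfolding e_def by simp
qed

theorem proposition2p4:
  fixes \<Theta> :: "'a::euclidean_space set"
    and f :: "'a \<Rightarrow> real"
    and \<theta>star :: 'a
    and R L M :: real
    and g :: "nat \<Rightarrow> 'a \<Rightarrow> real"
    and \<theta> :: "nat \<Rightarrow> 'a"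
    and G :: "nat \<Rightarrow> 'a \<Rightarrow> 'a"
    and H :: "nat \<Rightarrow> 'a \<Rightarrow> 'a \<Rightarrow> 'a"
  assumes convex_Theta: "convex \<Theta>"
    and f_cont: "continuous_on UNIV f"
    and f_convex: "convex_on UNIV f"
    and f_bdd: "bdd_below (range f)"
    and star_in: "\<theta>star \<in> \<Theta>"
    and star_min: "\<forall>\<theta>'\<in>\<Theta>. f \<theta>star \<le> f \<theta>'"
    and theta0_in: "\<theta> 0 \<in> \<Theta>"
    and R_pos: "R > 0"
    and level_bdd: "\<forall>x\<in>\<Theta>. f x \<le> f (\<theta> 0) \<longrightarrow> norm (x - \<theta>star) \<le> R"
    and surr: "\<forall>n\<ge>1. g n \<in> first_order_surrogates \<Theta> L f (\<theta> (n - 1))"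
    and minim: "\<forall>n\<ge>1. \<theta> n \<in> argmin_on \<Theta> (g n)"
    and grad: "\<forall>n\<ge>1. has_gradient_everywhere (\<lambda>x. g n x - f x) (G n)"
    and hess: "\<forall>n\<ge>1. \<forall>x. (G n has_derivative H n x) (at x)"
    and hess_lip: "\<forall>n\<ge>1. \<forall>x y. onorm (\<lambda>v. H n x v - H n y v) \<le> M * norm (x - y)"
    and hess_zero: "\<forall>n\<ge>1. \<forall>v. H n (\<theta> (n - 1)) v = 0"
  shows "(\<forall>n\<ge>1. f (\<theta> n) - f \<theta>star \<le> 9 * M * R ^ 3 / (2 * (real n + 3)\<^sup>2))
       \<and> (\<forall>\<mu>. strongly_convex \<mu> f \<longrightarrow>
            (\<exists>C>0. \<exists>n1. \<forall>n\<ge>n1.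
               f (\<theta> n) - f \<theta>star \<le> C * (f (\<theta> (n - 1)) - f \<theta>star) powr (3/2)))"
proof -
  have \<theta>_in: "\<theta> k \<in> \<Theta>" for k
    using minim theta0_in by (cases k) (auto simp: argmin_on_def)
  have cubic: "f (\<theta> n) \<le> f x + M / 6 * norm (x - \<theta> (n - 1)) ^ 3" if "1 \<le> n" "x \<in> \<Theta>" for n x
    using surrogate_minimizer_cubic_bound[of "g n" \<Theta> L f "\<theta> (n - 1)" "\<theta> n" "G n" "H n" M x]
      surr minim grad hess hess_lip hess_zero that by auto
  have M_nonneg: "0 \<le> M"
    using onorm_lipschitz_const_nonneg[of "H 1" M] hess hess_lip has_derivative_bounded_linear
    by blast
  have descent: "f (\<theta> k) \<le> f (\<theta> 0)" for k
  proof (induction k)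
    case (Suc k)
    then show ?case using cubic[of "Suc k" "\<theta> k"] \<theta>_in by simp
  qed simp
  have near_star: "norm (\<theta> k - \<theta>star) \<le> R" for k
    using level_bdd \<theta>_in descent by blast
  have rate: "f (\<theta> n) - f \<theta>star \<le> 9 * M * R ^ 3 / (2 * (real n + 3)\<^sup>2)" if "1 \<le> n" for n
  proof -
    have "f (\<theta> m) - f \<theta>star \<le> (1 - a) * (f (\<theta> (m - 1)) - f \<theta>star) + M * R ^ 3 * a ^ 3 / 6"
      if "1 \<le> m" "0 \<le> a" "a \<le> 1" for m a
      using that cubic
      by (intro convex_step_bound[OF convex_Theta f_convex \<theta>_in star_in near_star M_nonneg]) auto
    then show ?thesis
      using cubic_recurrence_rate[of "M * R ^ 3" "\<lambda>n. f (\<theta> n) - f \<theta>star" n] that M_nonneg R_pos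
      by (simp add: mult.assoc)
  qed
  have superlinear: "\<exists>C>0. \<exists>n1. \<forall>n\<ge>n1. f (\<theta> n) - f \<theta>star \<le> C * (f (\<theta> (n - 1)) - f \<theta>star) powr (3/2)"
    if strongly_convex: "strongly_convex \<mu> f" for \<mu>
  proof (intro exI conjI allI impI)
    show "0 < (M + 1) / 6 * (4 / \<mu>) powr (3/2)"
      using M_nonneg strongly_convex unfolding strongly_convex_def by simp
    show "f (\<theta> n) - f \<theta>star \<le> (M + 1) / 6 * (4 / \<mu>) powr (3/2) * (f (\<theta> (n - 1)) - f \<theta>star) powr (3/2)"
      if "1 \<le> n" for n
      using cubic[OF that star_in]
      by (intro cubic_step_superlinear[OF strongly_convex convex_Theta star_in star_min M_nonneg \<theta>_in])
        simp
  qed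
  show ?thesis using rate superlinear by blast
qed

end
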